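(* Let $\beta$ be a positive integer and $c_0>0$. There exist $\lambda=\lambda_{\beta,c_0}\in(0,\frac12)$ and $n_0$ such that for all $n\ge n_0$ and all $p$ with $(1+c_0)\frac{\log n}{n}\le p\le\frac12$, if $A$ is an $n\times n$ random matrix with i.i.d. Bernoulli$(p)$ entries then $$\mathbb{P}\{|\mathscr L_A(\lambda pn)|\ge\beta+1\}\le\big((1-p)^n n\big)^{\beta+3/4}.$$
   Context: For real $k\ge0$, $\mathscr L_A(k)$ is the set of column indices $j$ such that the $j$-th column of $A$ has at most $k$ nonzero entries. Bernoulli$(p)$ entries equal $1$ w.p. $p$ and $0$ otherwise. *)

theory Defs
  imports "HOL-Probability.Probability"
begin

text \<open>An n x n matrix is a function on index pairs (i,j) (row i, column j),
  with i, j ranging over {0..<n}.\<close>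

definition bernoulli_matrix :: "nat \<Rightarrow> real \<Rightarrow> (nat \<times> nat \<Rightarrow> real) pmf" where
  "bernoulli_matrix n p =
     Pi_pmf ({0..<n} \<times> {0..<n}) 0
       (\<lambda>_. map_pmf (\<lambda>b. if b then 1 else 0) (bernoulli_pmf p))"

definition sparse_cols :: "nat \<Rightarrow> (nat \<times> nat \<Rightarrow> real) \<Rightarrow> real \<Rightarrow> nat set" where
  "sparse_cols n A k =
     {j \<in> {0..<n}. real (card {i \<in> {0..<n}. A (i, j) \<noteq> 0}) \<le> k}"

end

theory Submission
  imports Defs
begin

text \<open>
  If at least \<open>\<beta> + 1\<close> columns are sparse, then some fixed set of \<open>\<beta> + 1\<close> columns is;
  the columns are independent, so a union bound gives the estimate
  \<open>(n choose (\<beta> + 1)) * q ^ (\<beta> + 1)\<close>, where \<open>q\<close> is the probability that a single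
  column has at most \<open>\<lambda>pn\<close> nonzero entries. The exponential-moment (Chernoff) bound with
  parameter \<open>s\<close> and \<open>\<lambda> = s\<^sup>2\<close> gives \<open>q \<le> (1 - p)^n * exp (3spn)\<close>. Since
  \<open>p \<ge> (1 + c\<^sub>0) log n / n\<close>, the quantity \<open>y = (1 - p)^n * n\<close> is at most \<open>exp (-\<delta>pn)\<close>
  with \<open>\<delta> = c\<^sub>0 / (1 + c\<^sub>0)\<close>; choosing \<open>s = \<delta> / (12 (\<beta> + 1))\<close>, the factor
  \<open>exp (3spn (\<beta> + 1))\<close> is absorbed by \<open>y^(1/4)\<close>.
\<close>

definition sparse_column_prob :: "nat \<Rightarrow> real \<Rightarrow> real \<Rightarrow> real" where
  "sparse_column_prob n p k =
     (\<Sum>T | T \<subseteq> {0..<n} \<and> real (card T) \<le> k. p ^ card T * (1 - p) ^ (n - card T))"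

lemma binomial_le_power: "n choose k \<le> n ^ k"
  by (cases "k \<le> n") (simp_all add: binomial_le_pow binomial_eq_0)

lemma sparse_column_prob_nonneg: "0 \<le> p \<Longrightarrow> p \<le> 1 \<Longrightarrow> 0 \<le> sparse_column_prob n p k"
  unfolding sparse_column_prob_def by (intro sum_nonneg) simp

lemma prob_bernoulli_entry:
  assumes "0 \<le> p" "p \<le> 1"
  shows "measure_pmf.prob (map_pmf (\<lambda>b. if b then 1 else 0) (bernoulli_pmf p)) {v::real. v \<noteq> 0} = p"
    and "measure_pmf.prob (map_pmf (\<lambda>b. if b then 1 else 0) (bernoulli_pmf p)) {0::real} = 1 - p"
proof -
  have "(\<lambda>b. if b then 1 else 0::real) -` {v. v \<noteq> 0} = {True}"
       "(\<lambda>b. if b then 1 else 0::real) -` {0} = {False}" by auto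
  then show "measure_pmf.prob (map_pmf (\<lambda>b. if b then 1 else 0) (bernoulli_pmf p)) {v::real. v \<noteq> 0} = p"
            "measure_pmf.prob (map_pmf (\<lambda>b. if b then 1 else 0) (bernoulli_pmf p)) {0::real} = 1 - p"
    using assms by (simp_all only: measure_map_pmf) (simp_all add: measure_pmf_single)
qed

lemma prod_indicator_pow:
  fixes a b :: "'b::comm_monoid_mult"
  assumes "T \<subseteq> {0..<n}"
  shows "(\<Prod>i<n. if i \<in> T then a else b) = a ^ card T * b ^ (n - card T)"
proof -
  have fin: "finite T" using assms finite_subset by blast
  have "(\<Prod>i<n. if i \<in> T then a else b) = (\<Prod>_\<in>T. a) * (\<Prod>_\<in>{..<n} - T. b)"
    using assms by (simp add: prod.If_cases Int_absorb1 Diff_eq atLeast0LessThan)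
  also have "\<dots> = a ^ card T * b ^ (n - card T)"
    using assms fin by (simp add: card_Diff_subset atLeast0LessThan)
  finally show ?thesis .
qed

lemma prob_column_supports:
  assumes p: "0 \<le> p" "p \<le> 1" and S: "S \<subseteq> {0..<n}" and Q: "\<forall>j\<in>S. Q j \<subseteq> {0..<n}"
  shows "measure_pmf.prob (bernoulli_matrix n p)
           {A. \<forall>j\<in>S. \<forall>i\<in>{0..<n}. (A (i,j) \<noteq> 0) = (i \<in> Q j)}
         = (\<Prod>j\<in>S. p ^ card (Q j) * (1 - p) ^ (n - card (Q j)))"
proof -
  define N where "N = {0..<n}"
  define B where "B = (\<lambda>(i,j). if j \<in> S then (if i \<in> Q j then {v::real. v \<noteq> 0} else {v. v = 0}) else UNIV)"
  have event: "{A. \<forall>j\<in>S. \<forall>i\<in>{0..<n}. (A (i,j) \<noteq> 0) = (i \<in> Q j)} = Pi (N \<times> N) B"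
  proof (intro equalityI subsetI)
    fix A :: "nat \<times> nat \<Rightarrow> real"
    assume "A \<in> Pi (N \<times> N) B"
    then have "A (i,j) \<in> B (i,j)" if "i < n" "j \<in> S" for i j
      using that S by (auto simp: Pi_def N_def)
    then show "A \<in> {A. \<forall>j\<in>S. \<forall>i\<in>{0..<n}. (A (i,j) \<noteq> 0) = (i \<in> Q j)}"
      by (fastforce simp: B_def split: if_splits)
  qed (fastforce simp: Pi_def B_def N_def)
  have "measure_pmf.prob (bernoulli_matrix n p) (Pi (N \<times> N) B)
      = (\<Prod>(i,j)\<in>N \<times> N. if j \<in> S then (if i \<in> Q j then p else 1 - p) else 1)"
    unfolding bernoulli_matrix_def N_def
    by (subst measure_Pi_pmf_Pi)
       (auto intro!: prod.cong simp: B_def prob_bernoulli_entry[OF p] simp del: measure_map_pmf)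
  also have "\<dots> = (\<Prod>i\<in>N. \<Prod>j\<in>N. if j \<in> S then (if i \<in> Q j then p else 1 - p) else 1)"
    by (simp add: prod.cartesian_product)
  also have "\<dots> = (\<Prod>j\<in>N. \<Prod>i\<in>N. if j \<in> S then (if i \<in> Q j then p else 1 - p) else 1)"
    by (rule prod.swap)
  also have "\<dots> = (\<Prod>j\<in>N. if j \<in> S then (\<Prod>i\<in>N. if i \<in> Q j then p else 1 - p) else 1)"
    by (intro prod.cong refl) auto
  also have "\<dots> = (\<Prod>j\<in>S. \<Prod>i<n. if i \<in> Q j then p else 1 - p)"
    using S by (simp add: prod.If_cases N_def Int_absorb1 atLeast0LessThan)
  also have "\<dots> = (\<Prod>j\<in>S. p ^ card (Q j) * (1 - p) ^ (n - card (Q j)))"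
    using Q by (intro prod.cong refl prod_indicator_pow) auto
  finally show ?thesis using event by simp
qed

lemma prob_card_sparse_cols_ge:
  assumes p: "0 \<le> p" "p \<le> 1"
  shows "measure_pmf.prob (bernoulli_matrix n p) {A. card (sparse_cols n A k) \<ge> b}
           \<le> real (n choose b) * sparse_column_prob n p k ^ b"
proof -
  define N where "N = {0..<n}"
  define F where "F = {T. T \<subseteq> N \<and> real (card T) \<le> k}"
  define SS where "SS = {S. S \<subseteq> N \<and> card S = b}"
  define E where "E = (\<lambda>S Q. {A::nat \<times> nat \<Rightarrow> real. \<forall>j\<in>S. \<forall>i\<in>{0..<n}. (A (i,j) \<noteq> 0) = (i \<in> Q j)})"
  define g where "g = (\<lambda>T::nat set. p ^ card T * (1 - p) ^ (n - card T))"
  have finN: "finite N" by (simp add: N_def)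
  have finF: "finite F" unfolding F_def by (rule finite_subset[of _ "Pow N"]) (use finN in auto)
  have finSS: "finite SS" unfolding SS_def by (rule finite_subset[of _ "Pow N"]) (use finN in auto)
  have finPiE: "finite (PiE S (\<lambda>_. F))" if "S \<in> SS" for S
    using that finN finF unfolding SS_def by (intro finite_PiE) (auto intro: finite_subset)
  have cover: "{A. card (sparse_cols n A k) \<ge> b} \<subseteq> (\<Union>S\<in>SS. \<Union>Q\<in>PiE S (\<lambda>_. F). E S Q)"
  proof
    fix A assume "A \<in> {A. card (sparse_cols n A k) \<ge> b}"
    then obtain S where S: "S \<subseteq> sparse_cols n A k" "card S = b"
      using obtain_subset_with_card_n[of b "sparse_cols n A k"] by auto
    define Q where "Q = restrict (\<lambda>j. {i\<in>N. A (i,j) \<noteq> 0}) S"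
    have "S \<in> SS" using S unfolding SS_def sparse_cols_def N_def by auto
    moreover have "Q \<in> PiE S (\<lambda>_. F)"
      unfolding Q_def restrict_PiE_iff
      using S(1) unfolding sparse_cols_def F_def N_def by auto
    moreover have "A \<in> E S Q" unfolding E_def Q_def N_def by auto
    ultimately show "A \<in> (\<Union>S\<in>SS. \<Union>Q\<in>PiE S (\<lambda>_. F). E S Q)" by blast
  qed
  have "measure_pmf.prob (bernoulli_matrix n p) {A. card (sparse_cols n A k) \<ge> b}
      \<le> measure_pmf.prob (bernoulli_matrix n p) (\<Union>S\<in>SS. \<Union>Q\<in>PiE S (\<lambda>_. F). E S Q)"
    by (rule measure_pmf.finite_measure_mono[OF cover]) simp
  also have "\<dots> \<le> (\<Sum>S\<in>SS. measure_pmf.prob (bernoulli_matrix n p) (\<Union>Q\<in>PiE S (\<lambda>_. F). E S Q))"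
    by (rule measure_pmf.finite_measure_subadditive_finite[OF finSS]) simp
  also have "\<dots> \<le> (\<Sum>S\<in>SS. \<Sum>Q\<in>PiE S (\<lambda>_. F). measure_pmf.prob (bernoulli_matrix n p) (E S Q))"
    by (rule sum_mono, rule measure_pmf.finite_measure_subadditive_finite[OF finPiE]) simp_all
  also have "\<dots> = (\<Sum>S\<in>SS. \<Sum>Q\<in>PiE S (\<lambda>_. F). \<Prod>j\<in>S. g (Q j))"
  proof (intro sum.cong refl)
    fix S Q assume S: "S \<in> SS" and Q: "Q \<in> PiE S (\<lambda>_. F)"
    have "S \<subseteq> {0..<n}" using S unfolding SS_def N_def by auto
    moreover have "\<forall>j\<in>S. Q j \<subseteq> {0..<n}" using Q unfolding F_def N_def by (auto simp: PiE_def Pi_def)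
    ultimately show "measure_pmf.prob (bernoulli_matrix n p) (E S Q) = (\<Prod>j\<in>S. g (Q j))"
      unfolding E_def g_def by (rule prob_column_supports[OF p])
  qed
  also have "\<dots> = (\<Sum>S\<in>SS. (\<Sum>T\<in>F. g T) ^ b)"
  proof (intro sum.cong refl)
    fix S assume "S \<in> SS"
    then have "finite S" "card S = b" using finN unfolding SS_def by (auto intro: finite_subset)
    then show "(\<Sum>Q\<in>PiE S (\<lambda>_. F). \<Prod>j\<in>S. g (Q j)) = (\<Sum>T\<in>F. g T) ^ b"
      using prod_sum_PiE[of S "\<lambda>_. F" "\<lambda>_ T. g T"] finF by simp
  qed
  also have "\<dots> = real (card SS) * (\<Sum>T\<in>F. g T) ^ b" by simp
  also have "card SS = n choose b"
    unfolding SS_def using n_subsets[OF finN, of b] by (simp add: N_def)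
  finally show ?thesis by (simp add: sparse_column_prob_def F_def g_def N_def)
qed

lemma sparse_column_prob_le_moment:
  assumes p: "0 \<le> p" "p \<le> 1" and s: "0 < s" "s \<le> 1"
  shows "sparse_column_prob n p k \<le> (1/s) powr k * (p * s + (1 - p)) ^ n"
proof -
  define N where "N = {0..<n}"
  define F where "F = {T. T \<subseteq> N \<and> real (card T) \<le> k}"
  have weight: "p ^ card T = (1/s) ^ card T * (p * s) ^ card T" for T
    using s by (simp add: power_mult_distrib[symmetric])
  have "(1/s) ^ card T \<le> (1/s) powr k" if "T \<in> F" for T
    using that s by (auto simp: F_def powr_realpow[symmetric] intro: powr_mono)
  then have "sparse_column_prob n p k
      \<le> (\<Sum>T\<in>F. (1/s) powr k * ((p * s) ^ card T * (1 - p) ^ (n - card T)))"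
    unfolding sparse_column_prob_def F_def N_def weight mult.assoc[symmetric]
    using p s by (intro sum_mono mult_right_mono) auto
  also have "\<dots> \<le> (1/s) powr k * (\<Sum>T\<in>Pow N. (p * s) ^ card T * (1 - p) ^ (n - card T))"
    unfolding sum_distrib_left using p s by (intro sum_mono2) (auto simp: F_def N_def)
  also have "(\<Sum>T\<in>Pow N. (p * s) ^ card T * (1 - p) ^ (n - card T))
      = (\<Sum>T\<in>Pow N. (\<Prod>_\<in>T. p * s) * (\<Prod>_\<in>N - T. 1 - p))"
    by (intro sum.cong refl) (auto simp: N_def card_Diff_subset finite_subset)
  also have "\<dots> = (\<Prod>_\<in>N. p * s + (1 - p))"
    by (rule prod_add[symmetric]) (simp add: N_def)
  also have "\<dots> = (p * s + (1 - p)) ^ n"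
    by (simp add: N_def)
  finally show ?thesis .
qed

lemma sparse_column_prob_le_exp:
  assumes p: "0 \<le> p" "p \<le> 1/2" and s: "0 < s" "s \<le> 1"
  shows "sparse_column_prob n p (s\<^sup>2 * p * n) \<le> (1 - p) ^ n * exp (3 * s * p * n)"
proof -
  have "(1/s) powr (s\<^sup>2 * p * n) = exp (s * p * n * (s * ln (1/s)))"
    using s by (simp add: powr_def power2_eq_square mult_ac)
  also have "\<dots> \<le> exp (s * p * n)"
  proof -
    have "s * ln (1/s) \<le> s * (1/s)"
      using s ln_le_minus_one[of "1/s"] by (intro mult_left_mono) auto
    then show ?thesis
      using s p by (simp add: mult_left_le)
  qed
  finally have moment: "(1/s) powr (s\<^sup>2 * p * n) \<le> exp (s * p * n)" .
  have "p * s + (1 - p) \<le> (1 - p) * (1 + 2 * p * s)"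
    using mult_nonneg_nonneg[of "p * s" "1 - 2 * p"] p s by (simp add: algebra_simps)
  also have "\<dots> \<le> (1 - p) * exp (2 * p * s)"
    using p by (intro mult_left_mono) auto
  finally have "(p * s + (1 - p)) ^ n \<le> ((1 - p) * exp (2 * p * s)) ^ n"
    using p s by (intro power_mono) auto
  also have "\<dots> = (1 - p) ^ n * exp (2 * s * p * n)"
    by (simp add: power_mult_distrib exp_of_nat_mult[symmetric] mult_ac)
  finally have base: "(p * s + (1 - p)) ^ n \<le> (1 - p) ^ n * exp (2 * s * p * n)" .
  have "sparse_column_prob n p (s\<^sup>2 * p * n) \<le> (1/s) powr (s\<^sup>2 * p * n) * (p * s + (1 - p)) ^ n"
    using p s by (intro sparse_column_prob_le_moment) auto
  also have "\<dots> \<le> exp (s * p * n) * ((1 - p) ^ n * exp (2 * s * p * n))"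
    using moment base p s by (intro mult_mono) auto
  also have "\<dots> = (1 - p) ^ n * exp (3 * s * p * n)"
    by (simp add: mult_exp_exp algebra_simps)
  finally show ?thesis .
qed

lemma prob_card_sparse_cols_ge_le_exp:
  assumes p: "0 \<le> p" "p \<le> 1/2" and s: "0 < s" "s \<le> 1"
  shows "measure_pmf.prob (bernoulli_matrix n p) {A. card (sparse_cols n A (s\<^sup>2 * p * n)) \<ge> b}
           \<le> ((1 - p) ^ n * n * exp (3 * s * p * n)) ^ b"
proof -
  have "measure_pmf.prob (bernoulli_matrix n p) {A. card (sparse_cols n A (s\<^sup>2 * p * n)) \<ge> b}
      \<le> real (n choose b) * sparse_column_prob n p (s\<^sup>2 * p * n) ^ b"
    using p by (intro prob_card_sparse_cols_ge) simp_all
  also have "\<dots> \<le> real n ^ b * ((1 - p) ^ n * exp (3 * s * p * n)) ^ b"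
  proof (rule mult_mono)
    show "real (n choose b) \<le> real n ^ b"
      by (metis binomial_le_power of_nat_le_iff of_nat_power)
    show "sparse_column_prob n p (s\<^sup>2 * p * n) ^ b \<le> ((1 - p) ^ n * exp (3 * s * p * n)) ^ b"
      using sparse_column_prob_le_exp[OF p s] sparse_column_prob_nonneg[of p n] p
      by (intro power_mono) simp_all
  qed (use sparse_column_prob_nonneg[of p n] p in simp_all)
  also have "\<dots> = ((1 - p) ^ n * n * exp (3 * s * p * n)) ^ b"
    by (simp add: power_mult_distrib mult_ac)
  finally show ?thesis .
qed

lemma one_minus_power_mult_le_exp:
  fixes c p :: real
  assumes c: "c > 0" and n: "n \<ge> 1" and p: "(1 + c) * ln n / n \<le> p" "p \<le> 1"
  shows "(1 - p) ^ n * n \<le> exp (- (c / (1 + c)) * p * n)"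
proof -
  have "(1 - p) ^ n \<le> exp (- p) ^ n"
    using p(2) exp_ge_add_one_self[of "- p"] by (intro power_mono) auto
  also have "\<dots> = exp (- p * n)"
    by (simp add: exp_of_nat_mult[symmetric] mult_ac)
  finally have decay: "(1 - p) ^ n \<le> exp (- p * n)" .
  have "ln n \<le> p * n / (1 + c)"
    using p(1) n c by (simp add: field_simps)
  then have growth: "real n \<le> exp (p * n / (1 + c))"
    using n by (metis exp_le_cancel_iff exp_ln of_nat_0_less_iff less_le_trans zero_less_one)
  have "(1 - p) ^ n * n \<le> exp (- p * n) * exp (p * n / (1 + c))"
    using decay growth by (intro mult_mono) auto
  also have "\<dots> = exp (- p * n + p * n / (1 + c))"
    by (rule mult_exp_exp)
  also have "- p * n + p * n / (1 + c) = - (c / (1 + c)) * p * n"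
    using c by (simp add: field_simps)
  finally show ?thesis .
qed

lemma power_le_powr_if_mult_power_le_one:
  fixes y z :: real
  assumes y: "y > 0" and z: "z \<ge> 0" and small: "y * z ^ (4 * b) \<le> 1"
  shows "(y * z) ^ b \<le> y powr (real b - 1/4)"
proof -
  define w where "w = y powr (1/4) * z ^ b"
  have "w ^ 4 = y * z ^ (4 * b)"
    using y by (simp add: w_def power_mult_distrib powr_power power_mult[symmetric] mult.commute)
  then have "w \<le> 1"
    using small z by (metis w_def power_le_one_iff zero_le_power powr_ge_zero
                        zero_le_mult_iff zero_neq_numeral)
  have "(y * z) ^ b = y powr (real b - 1/4) * w"
    using y by (simp add: w_def power_mult_distrib powr_realpow[symmetric] powr_add[symmetric])
  also have "\<dots> \<le> y powr (real b - 1/4)"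
    using \<open>w \<le> 1\<close> by (simp add: mult_left_le)
  finally show ?thesis .
qed

theorem proposition4p6:
  fixes \<beta> :: nat and c\<^sub>0 :: real
  assumes "\<beta> \<ge> 1" and "c\<^sub>0 > 0"
  shows "\<exists>lam::real. 0 < lam \<and> lam < 1/2 \<and>
          (\<exists>n\<^sub>0::nat. \<forall>n\<ge>n\<^sub>0. \<forall>p::real.
             (1 + c\<^sub>0) * ln (real n) / real n \<le> p \<and> p \<le> 1/2 \<longrightarrow>
             measure_pmf.prob (bernoulli_matrix n p)
               {A. card (sparse_cols n A (lam * p * real n)) \<ge> \<beta> + 1}
             \<le> ((1 - p) ^ n * real n) powr (real \<beta> + 3/4))"
proof -
  define \<delta> where "\<delta> = c\<^sub>0 / (1 + c\<^sub>0)"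
  define s where "s = \<delta> / (12 * (\<beta> + 1))"
  have "0 < \<delta>" "\<delta> < 1" using \<open>c\<^sub>0 > 0\<close> by (auto simp: \<delta>_def field_simps)
  then have s: "0 < s" "s < 1/2" by (auto simp: s_def field_simps)
  show ?thesis
  proof (intro exI[of _ "s\<^sup>2"] conjI exI[of _ "1::nat"] allI impI)
    show "0 < s\<^sup>2" "s\<^sup>2 < 1/2"
      using s mult_strict_mono[of s 1 s "1/2"] by (auto simp: power2_eq_square)
    fix n :: nat and p :: real
    assume n: "1 \<le> n" and p: "(1 + c\<^sub>0) * ln (real n) / real n \<le> p \<and> p \<le> 1/2"
    have "0 \<le> (1 + c\<^sub>0) * ln (real n) / real n" using n \<open>c\<^sub>0 > 0\<close> by simp
    with p have p0: "0 \<le> p" by linarith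
    define y where "y = (1 - p) ^ n * real n"
    define z where "z = exp (3 * s * p * n)"
    have "real (4 * (\<beta> + 1)) * (3 * s * p * n) = \<delta> * p * n"
      by (simp add: s_def field_simps)
    then have "z ^ (4 * (\<beta> + 1)) = exp (\<delta> * p * n)"
      unfolding z_def by (metis exp_of_nat_mult)
    moreover have "y \<le> exp (- \<delta> * p * n)"
      using one_minus_power_mult_le_exp[OF \<open>c\<^sub>0 > 0\<close> n] p by (simp add: y_def \<delta>_def)
    ultimately have "y * z ^ (4 * (\<beta> + 1)) \<le> 1"
      using mult_right_mono[of y "exp (- \<delta> * p * n)" "exp (\<delta> * p * n)"]
      by (simp add: mult_exp_exp)
    then have "(y * z) ^ (\<beta> + 1) \<le> y powr (real \<beta> + 3/4)"
      using power_le_powr_if_mult_power_le_one[of y z "\<beta> + 1"] n p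
      by (simp add: y_def z_def add.commute)
    then show "measure_pmf.prob (bernoulli_matrix n p)
        {A. card (sparse_cols n A (s\<^sup>2 * p * real n)) \<ge> \<beta> + 1}
        \<le> ((1 - p) ^ n * real n) powr (real \<beta> + 3/4)"
      using prob_card_sparse_cols_ge_le_exp[of p s n "\<beta> + 1"] p0 p s
      by (simp add: y_def z_def)
  qed
qed

end
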